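(* Let $T$ be a topologically recurrent continuous linear operator on a real or complex Hausdorff topological vector space $X$ over $\mathbb{K}\in\{\mathbb{R},\mathbb{C}\}$, and let $\mathbb{T}=\{z\in\mathbb{C}:|z|=1\}$. Then: (a) for every $\lambda\in\mathbb{K}\setminus\mathbb{T}$ the operator $T-\lambda I$ has dense range; (b) if $X$ is real, then for every $\lambda\in\mathbb{C}\setminus\mathbb{T}$ the operator $\widetilde T-\lambda I$ has dense range in $\widetilde X$. Consequently, for every polynomial $p$ with coefficients in $\mathbb{K}$ having no roots in $\mathbb{T}$, the operator $p(T)$ has dense range in $X$.
   Context: $T$ is topologically recurrent if for every non-empty open $U\subset X$ there is $n\in\mathbb{N}$ with $T^n(U)\cap U\neq\varnothing$. For a real space $X$, its complexification is $\widetilde X=\{x+iy:x,y\in X\}$, topologically identified with $X\oplus X$, with complex scalar multiplication $(\alpha+i\beta)(x+iy)=(\alpha x-\beta y)+i(\alpha y+\beta x)$, and the complexified operator is $\widetilde T(x+iy)=Tx+iTy$. *)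

theory Defs
  imports "HOL-Analysis.Analysis" "HOL-Computational_Algebra.Polynomial"
begin

text \<open>Hausdorffness is imposed via the type class t2_space on 'a.\<close>
definition tvs :: "('k::{field,topological_space} \<Rightarrow> 'a::{ab_group_add,topological_space} \<Rightarrow> 'a) \<Rightarrow> bool" where
  "tvs sc \<longleftrightarrow> vector_space sc
     \<and> continuous_on UNIV (\<lambda>p::'a \<times> 'a. fst p + snd p)
     \<and> continuous_on UNIV (\<lambda>p::'k \<times> 'a. sc (fst p) (snd p))"

definition cont_lin_op :: "('k::field \<Rightarrow> 'a::{ab_group_add,topological_space} \<Rightarrow> 'a) \<Rightarrow> ('a \<Rightarrow> 'a) \<Rightarrow> bool" where
  "cont_lin_op sc T \<longleftrightarrow> Vector_Spaces.linear sc sc T \<and> continuous_on UNIV T"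

definition top_recurrent :: "('a::topological_space \<Rightarrow> 'a) \<Rightarrow> bool" where
  "top_recurrent T \<longleftrightarrow> (\<forall>U. open U \<and> U \<noteq> {} \<longrightarrow> (\<exists>n::nat. n \<ge> 1 \<and> (T ^^ n) ` U \<inter> U \<noteq> {}))"

definition dense_range :: "('a \<Rightarrow> 'b::topological_space) \<Rightarrow> bool" where
  "dense_range f \<longleftrightarrow> closure (range f) = UNIV"

text \<open>Complexification of a real space X, identified with X \<times> X (product topology).\<close>
definition cplx_scale :: "(real \<Rightarrow> 'a::ab_group_add \<Rightarrow> 'a) \<Rightarrow> complex \<Rightarrow> 'a \<times> 'a \<Rightarrow> 'a \<times> 'a" where
  "cplx_scale sc z v = (sc (Re z) (fst v) - sc (Im z) (snd v), sc (Re z) (snd v) + sc (Im z) (fst v))"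

definition cplx_op :: "('a \<Rightarrow> 'a) \<Rightarrow> 'a \<times> 'a \<Rightarrow> 'a \<times> 'a" where
  "cplx_op T v = (T (fst v), T (snd v))"

definition poly_op :: "('k::comm_ring_1 \<Rightarrow> 'a::ab_group_add \<Rightarrow> 'a) \<Rightarrow> 'k poly \<Rightarrow> ('a \<Rightarrow> 'a) \<Rightarrow> 'a \<Rightarrow> 'a" where
  "poly_op sc p T x = (\<Sum>i\<le>degree p. sc (coeff p i) ((T ^^ i) x))"

end

theory Submission
  imports Defs "HOL-Computational_Algebra.Fundamental_Theorem_Algebra"
begin

text \<open>If \<open>y\<close> were not in the closure of the range of \<open>Q = p(T)\<close>, recurrence would give a point \<open>x\<close>
  with \<open>x\<close> and \<open>T\<^sup>n x\<close> both close to \<open>y\<close>. When \<open>p\<close> has no roots on the unit circle, the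
  polynomial \<open>t\<^sup>n - 1\<close> is invertible modulo \<open>p\<close> by a polynomial \<open>c t + d\<close> whose coefficients
  are bounded independently of \<open>n\<close> (for a factor \<open>t - \<lambda>\<close> one takes \<open>d = 1 / (\<lambda>\<^sup>n - 1)\<close>, and
  \<open>|\<lambda>\<^sup>n - 1| \<ge> ||\<lambda>| - 1|\<close>). Hence \<open>x\<close> is congruent modulo \<open>range Q\<close> to
  \<open>c T (T\<^sup>n x - x) + d (T\<^sup>n x - x)\<close>, which is small, so \<open>range Q\<close> meets every neighbourhood
  of \<open>y\<close>. Over the reals a nonreal \<open>\<lambda>\<close> is handled by the real quadratic factor
  \<open>(t - \<lambda>)(t - cnj \<lambda>)\<close>, which also gives the complexified statement, and the general
  polynomial case follows by factorization, since composition with a continuous map of dense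
  range preserves density.\<close>

lemma tvs_vector_space: "tvs sc \<Longrightarrow> vector_space sc"
  by (simp add: tvs_def)

lemma continuous_on_tvs_add:
  fixes sc :: "'k::{field,topological_space} \<Rightarrow> 'a::{ab_group_add,topological_space} \<Rightarrow> 'a"
    and f g :: "'x::topological_space \<Rightarrow> 'a"
  assumes "tvs sc" "continuous_on UNIV f" "continuous_on UNIV g"
  shows "continuous_on UNIV (\<lambda>x. f x + g x)"
proof -
  have "continuous_on UNIV (\<lambda>p::'a \<times> 'a. fst p + snd p)"
    using assms(1) by (simp add: tvs_def)
  from continuous_on_compose2[OF this continuous_on_Pair[OF assms(2,3)]] show ?thesis
    by simp
qed

lemma continuous_on_tvs_scale:
  fixes sc :: "'k::{field,topological_space} \<Rightarrow> 'a::{ab_group_add,topological_space} \<Rightarrow> 'a"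
    and f :: "'x::topological_space \<Rightarrow> 'k" and g :: "'x \<Rightarrow> 'a"
  assumes "tvs sc" "continuous_on UNIV f" "continuous_on UNIV g"
  shows "continuous_on UNIV (\<lambda>x. sc (f x) (g x))"
proof -
  have "continuous_on UNIV (\<lambda>p::'k \<times> 'a. sc (fst p) (snd p))"
    using assms(1) by (simp add: tvs_def)
  from continuous_on_compose2[OF this continuous_on_Pair[OF assms(2,3)]] show ?thesis
    by simp
qed

lemma continuous_on_tvs_diff:
  fixes sc :: "'k::{field,topological_space} \<Rightarrow> 'a::{ab_group_add,topological_space} \<Rightarrow> 'a"
    and f g :: "'x::topological_space \<Rightarrow> 'a"
  assumes "tvs sc" "continuous_on UNIV f" "continuous_on UNIV g"
  shows "continuous_on UNIV (\<lambda>x. f x - g x)"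
proof -
  interpret vector_space sc using assms(1) by (rule tvs_vector_space)
  have "continuous_on UNIV (\<lambda>x. f x + sc (-1) (g x))"
    by (intro continuous_on_tvs_add[OF assms(1)] continuous_on_tvs_scale[OF assms(1)]
        assms(2,3) continuous_on_const)
  then show ?thesis by simp
qed

lemma continuous_on_product_nhds:
  fixes f :: "'a::topological_space \<times> 'b::topological_space \<Rightarrow> 'c::topological_space"
  assumes "continuous_on UNIV f" "open N" "f (a, b) \<in> N"
  obtains A B where "open A" "open B" "a \<in> A" "b \<in> B" "\<And>x y. x \<in> A \<Longrightarrow> y \<in> B \<Longrightarrow> f (x, y) \<in> N"
proof -
  have "open (f -` N)" by (rule open_vimage[OF assms(2,1)])
  moreover have "(a, b) \<in> f -` N" using assms(3) by simp
  ultimately obtain A B where "open A" "open B" "(a, b) \<in> A \<times> B" "A \<times> B \<subseteq> f -` N"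
    by (rule open_prod_elim)
  then show ?thesis by (intro that) auto
qed

lemma tvs_add_nhds:
  fixes sc :: "'k::{field,topological_space} \<Rightarrow> 'a::{ab_group_add,topological_space} \<Rightarrow> 'a"
    and N :: "'a set"
  assumes "tvs sc" "open N" "0 \<in> N"
  obtains A B where "open A" "open B" "0 \<in> A" "0 \<in> B" "\<And>a b. a \<in> A \<Longrightarrow> b \<in> B \<Longrightarrow> a + b \<in> N"
proof -
  have "continuous_on UNIV (\<lambda>p::'a \<times> 'a. fst p + snd p)"
    using assms(1) by (simp add: tvs_def)
  from continuous_on_product_nhds[OF this assms(2), of 0 0] assms(3) that show ?thesis
    by auto
qed

lemma tvs_diff_nhds:
  fixes sc :: "'k::{field,topological_space} \<Rightarrow> 'a::{ab_group_add,topological_space} \<Rightarrow> 'a"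
    and N :: "'a set"
  assumes "tvs sc" "open N" "0 \<in> N"
  obtains A B where "open A" "open B" "0 \<in> A" "0 \<in> B" "\<And>a b. a \<in> A \<Longrightarrow> b \<in> B \<Longrightarrow> a - b \<in> N"
proof -
  have "continuous_on UNIV (\<lambda>p::'a \<times> 'a. fst p - snd p)"
    by (intro continuous_on_tvs_diff[OF assms(1)] continuous_on_fst continuous_on_snd continuous_on_id)
  from continuous_on_product_nhds[OF this assms(2), of 0 0] assms(3) that show ?thesis
    by auto
qed

text \<open>Joint continuity of the scalar multiplication at \<open>(0, 0)\<close> gives a ball of scalars of
  radius \<open>\<delta>\<close> and a neighbourhood \<open>B\<close>; shrinking \<open>B\<close> by the factor \<open>\<delta> / 2C\<close> absorbs all
  scalars of norm at most \<open>C\<close>.\<close>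
lemma tvs_bounded_scale_nhds:
  fixes sc :: "'k::real_normed_field \<Rightarrow> 'a::{ab_group_add,topological_space} \<Rightarrow> 'a"
    and N :: "'a set"
  assumes tvs: "tvs sc" and N: "open N" "0 \<in> N"
  obtains W where "open W" "0 \<in> W" "\<And>c w. norm c \<le> C \<Longrightarrow> w \<in> W \<Longrightarrow> sc c w \<in> N"
proof -
  interpret vector_space sc using tvs by (rule tvs_vector_space)
  have "continuous_on UNIV (\<lambda>p::'k \<times> 'a. sc (fst p) (snd p))"
    using tvs by (simp add: tvs_def)
  from continuous_on_product_nhds[OF this N(1), of 0 0] N(2)
  obtain A B where AB: "open A" "open B" "0 \<in> A" "0 \<in> B" "\<And>c w. c \<in> A \<Longrightarrow> w \<in> B \<Longrightarrow> sc c w \<in> N"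
    by auto
  then obtain \<delta> where \<delta>: "\<delta> > 0" "ball 0 \<delta> \<subseteq> A" by (meson openE)
  define K where "K = max C 1"
  define k where "k = \<delta> / (2 * K)"
  have K: "K \<ge> 1" "C \<le> K" unfolding K_def by auto
  have k: "k > 0" unfolding k_def using \<delta> K by auto
  define W where "W = sc (of_real (1 / k)) -` B"
  have "continuous_on UNIV (sc (of_real (1 / k)))"
    using continuous_on_tvs_scale[OF tvs continuous_on_const continuous_on_id] by simp
  then have "open W" unfolding W_def by (rule open_vimage[OF AB(2)])
  moreover have "0 \<in> W" unfolding W_def using AB by simp
  moreover have "sc c w \<in> N" if "norm c \<le> C" "w \<in> W" for c w
  proof -
    have "norm (c * of_real k) = norm c * k" using k by (simp add: norm_mult)
    also have "\<dots> \<le> K * k" using that K k by (simp add: mult_right_mono)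
    also have "\<dots> < \<delta>" unfolding k_def using K \<delta> by (simp add: field_simps)
    finally have "sc (c * of_real k) (sc (of_real (1 / k)) w) \<in> N"
      using \<delta> that(2) by (intro AB(5)) (auto simp: W_def)
    then show ?thesis using k by (simp add: of_real_divide)
  qed
  ultimately show ?thesis by (rule that)
qed

lemma tvs_perturbation_nhds:
  fixes sc :: "'k::real_normed_field \<Rightarrow> 'a::{ab_group_add,topological_space} \<Rightarrow> 'a"
    and T :: "'a \<Rightarrow> 'a" and N :: "'a set"
  assumes tvs: "tvs sc" and T: "continuous_on UNIV T" "T 0 = 0" and N: "open N" "0 \<in> N"
  obtains W where "open W" "0 \<in> W"
    "\<And>w w' (c::'k) d. w \<in> W \<Longrightarrow> w' \<in> W \<Longrightarrow> norm c \<le> C \<Longrightarrow> norm d \<le> C \<Longrightarrow>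
       w + (sc c (T (w' - w)) + sc d (w' - w)) \<in> N"
proof -
  obtain A B where AB: "open A" "open B" "0 \<in> A" "0 \<in> B" "\<And>a b. a \<in> A \<Longrightarrow> b \<in> B \<Longrightarrow> a + b \<in> N"
    by (rule tvs_add_nhds[OF tvs N]) (rule that)
  obtain B1 B2 where B: "open B1" "open B2" "0 \<in> B1" "0 \<in> B2"
    "\<And>a b. a \<in> B1 \<Longrightarrow> b \<in> B2 \<Longrightarrow> a + b \<in> B"
    by (rule tvs_add_nhds[OF tvs AB(2,4)]) (rule that)
  obtain V1 where V1: "open V1" "0 \<in> V1" "\<And>c w. norm c \<le> C \<Longrightarrow> w \<in> V1 \<Longrightarrow> sc c w \<in> B1"
    by (rule tvs_bounded_scale_nhds[OF tvs B(1,3)]) (rule that)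
  obtain V2 where V2: "open V2" "0 \<in> V2" "\<And>c w. norm c \<le> C \<Longrightarrow> w \<in> V2 \<Longrightarrow> sc c w \<in> B2"
    by (rule tvs_bounded_scale_nhds[OF tvs B(2,4)]) (rule that)
  have V: "open (V2 \<inter> T -` V1)" "0 \<in> V2 \<inter> T -` V1"
    using V1 V2 T by (auto intro!: open_vimage)
  obtain D1 D2 where D: "open D1" "open D2" "0 \<in> D1" "0 \<in> D2"
    "\<And>a b. a \<in> D1 \<Longrightarrow> b \<in> D2 \<Longrightarrow> a - b \<in> V2 \<inter> T -` V1"
    by (rule tvs_diff_nhds[OF tvs V]) (rule that)
  show ?thesis
  proof (rule that[of "A \<inter> D1 \<inter> D2"])
    fix w w' and c d :: 'k
    assume "w \<in> A \<inter> D1 \<inter> D2" "w' \<in> A \<inter> D1 \<inter> D2" "norm c \<le> C" "norm d \<le> C"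
    then have "w' - w \<in> V2 \<inter> T -` V1" "w \<in> A" using D(5)[of w' w] by auto
    with V1(3) V2(3) \<open>norm c \<le> C\<close> \<open>norm d \<le> C\<close>
    show "w + (sc c (T (w' - w)) + sc d (w' - w)) \<in> N"
      by (intro AB(5) B(5)) auto
  qed (use AB D in auto)
qed

lemma dense_range_if_recurrent_approximation:
  fixes sc :: "'k::real_normed_field \<Rightarrow> 'a::{ab_group_add,topological_space} \<Rightarrow> 'a"
    and T :: "'a \<Rightarrow> 'a" and Q :: "'b \<Rightarrow> 'a"
  assumes tvs: "tvs sc" and T: "continuous_on UNIV T" "T 0 = 0" and rec: "top_recurrent T"
    and approx: "\<And>n. n \<ge> 1 \<Longrightarrow> \<exists>c d. norm c \<le> C \<and> norm d \<le> C \<and>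
       (\<forall>z. z - sc c (T ((T^^n) z - z)) - sc d ((T^^n) z - z) \<in> range Q)"
  shows "dense_range Q"
proof (rule ccontr)
  interpret vector_space sc using tvs by (rule tvs_vector_space)
  assume "\<not> dense_range Q"
  then obtain y where y: "y \<notin> closure (range Q)" unfolding dense_range_def by auto
  have "continuous_on UNIV ((+) y)"
    using continuous_on_tvs_add[OF tvs continuous_on_const continuous_on_id] by simp
  then have "open ((+) y -` (- closure (range Q)))"
    by (rule open_vimage[OF open_Compl[OF closed_closure]])
  moreover have "0 \<in> (+) y -` (- closure (range Q))" using y by simp
  ultimately obtain W where W: "open W" "0 \<in> W"
    "\<And>w w' c d. w \<in> W \<Longrightarrow> w' \<in> W \<Longrightarrow> norm c \<le> C \<Longrightarrow> norm d \<le> C \<Longrightarrow>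
       w + (sc c (T (w' - w)) + sc d (w' - w)) \<in> (+) y -` (- closure (range Q))"
    by (rule tvs_perturbation_nhds[OF tvs T, where C = C]) (rule that)
  define U where "U = (\<lambda>x. x - y) -` W"
  have "continuous_on UNIV (\<lambda>x. x - y)"
    using continuous_on_tvs_diff[OF tvs continuous_on_id continuous_on_const] by simp
  then have "open U" unfolding U_def using W(1) by (rule open_vimage[rotated])
  moreover have "y \<in> U" unfolding U_def using W(2) by simp
  ultimately obtain n where n: "n \<ge> 1" "(T^^n) ` U \<inter> U \<noteq> {}"
    using rec unfolding top_recurrent_def by blast
  then obtain x where x: "x - y \<in> W" "(T^^n) x - y \<in> W"
    unfolding U_def by auto
  obtain c d where cd: "norm c \<le> C" "norm d \<le> C"
    "x - sc c (T ((T^^n) x - x)) - sc d ((T^^n) x - x) \<in> range Q"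
    using approx[OF n(1)] by blast
  have "(x - y) + (sc (- c) (T (((T^^n) x - y) - (x - y))) + sc (- d) (((T^^n) x - y) - (x - y)))
      \<in> (+) y -` (- closure (range Q))"
    using W(3)[OF x, of "- c" "- d"] cd(1,2) by simp
  then have "x - sc c (T ((T^^n) x - x)) - sc d ((T^^n) x - x) \<notin> closure (range Q)"
    by (simp add: algebra_simps)
  moreover have "x - sc c (T ((T^^n) x - x)) - sc d ((T^^n) x - x) \<in> closure (range Q)"
    using cd(3) closure_subset[of "range Q"] by (rule subsetD[rotated])
  ultimately show False by contradiction
qed

context vector_space
begin

lemma poly_op_eq_sum:
  assumes "degree p \<le> N"
  shows "poly_op scale p T x = (\<Sum>i\<le>N. scale (coeff p i) ((T^^i) x))"
  unfolding poly_op_def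
  by (rule sum.mono_neutral_left) (use assms in \<open>auto simp: not_le intro!: coeff_eq_0\<close>)

lemma poly_op_0 [simp]: "poly_op scale 0 T x = 0"
  by (simp add: poly_op_def)

lemma poly_op_1 [simp]: "poly_op scale 1 T x = x"
  by (simp add: poly_op_def)

lemma poly_op_const [simp]: "poly_op scale [:a:] T x = scale a x"
  by (simp add: poly_op_def)

lemma poly_op_monom: "poly_op scale (monom a n) T x = scale a ((T^^n) x)"
  by (simp add: poly_op_eq_sum[OF degree_monom_le] if_distrib[of "\<lambda>c. scale c _"] cong: if_cong)

lemma poly_op_add: "poly_op scale (p + q) T x = poly_op scale p T x + poly_op scale q T x"
proof -
  have "degree (p + q) \<le> max (degree p) (degree q)" by (rule degree_add_le) auto
  then show ?thesis
    by (simp add: poly_op_eq_sum[of _ "max (degree p) (degree q)"] scale_left_distrib sum.distrib)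
qed

lemma poly_op_smult: "poly_op scale (smult a p) T x = scale a (poly_op scale p T x)"
  by (simp add: poly_op_eq_sum[OF degree_smult_le] poly_op_def scale_sum_right)

lemma poly_op_uminus: "poly_op scale (- p) T x = - poly_op scale p T x"
  by (simp add: poly_op_def sum_negf)

lemma poly_op_diff: "poly_op scale (p - q) T x = poly_op scale p T x - poly_op scale q T x"
  using poly_op_add[of p "- q"] by (simp add: poly_op_uminus)

context
  fixes T :: "'b \<Rightarrow> 'b"
  assumes linear_T: "Vector_Spaces.linear scale scale T"
begin

interpretation T: module_hom scale scale T
  using linear_T by (simp add: linear_iff_module_hom)

lemma poly_op_pCons: "poly_op scale (pCons a p) T x = scale a x + T (poly_op scale p T x)"
proof -
  have "poly_op scale (pCons a p) T x = (\<Sum>i\<le>Suc (degree p). scale (coeff (pCons a p) i) ((T^^i) x))"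
    by (rule poly_op_eq_sum) (simp add: degree_pCons_le)
  also have "\<dots> = scale a x + (\<Sum>i\<le>degree p. scale (coeff p i) ((T^^Suc i) x))"
    by (subst sum.atMost_Suc_shift) simp
  also have "\<dots> = scale a x + T (poly_op scale p T x)"
    by (simp add: poly_op_def T.sum T.scale)
  finally show ?thesis .
qed

lemma poly_op_mult: "poly_op scale (p * q) T x = poly_op scale p T (poly_op scale q T x)"
  by (induction p) (simp_all add: poly_op_add poly_op_smult poly_op_pCons)

lemma poly_op_linear_factor: "poly_op scale [:- a, 1:] T x = T x - scale a x"
  by (simp add: poly_op_pCons)

end

end

lemma continuous_on_poly_op:
  assumes tvs: "tvs sc" and T: "cont_lin_op sc T"
  shows "continuous_on UNIV (poly_op sc p T)"
proof (induction p)
  case 0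
  interpret vector_space sc using tvs by (rule tvs_vector_space)
  show ?case by simp
next
  case (pCons a p)
  interpret vector_space sc using tvs by (rule tvs_vector_space)
  have linear: "Vector_Spaces.linear sc sc T" and cont: "continuous_on UNIV T"
    using T by (simp_all add: cont_lin_op_def)
  have "continuous_on UNIV (\<lambda>x. T (poly_op sc p T x))"
    using continuous_on_compose2[OF cont pCons.IH] by simp
  then have "continuous_on UNIV (\<lambda>x. sc a x + T (poly_op sc p T x))"
    by (intro continuous_on_tvs_add[OF tvs] continuous_on_tvs_scale[OF tvs]
        continuous_on_const continuous_on_id)
  then show ?case by (simp add: poly_op_pCons[OF linear])
qed

lemma dense_range_comp:
  assumes "continuous_on UNIV f" "dense_range f" "dense_range g"
  shows "dense_range (f \<circ> g)"
proof -
  have "range f = f ` closure (range g)" using assms(3) by (simp add: dense_range_def)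
  also have "\<dots> \<subseteq> closure (f ` range g)"
    by (rule image_closure_subset[OF continuous_on_subset[OF assms(1)]])
      (auto intro: closure_subset[THEN subsetD])
  also have "\<dots> = closure (range (f \<circ> g))" by (simp add: image_comp)
  finally have "closure (range f) \<subseteq> closure (range (f \<circ> g))"
    by (rule closure_minimal) simp
  then show ?thesis using assms(2) by (auto simp: dense_range_def)
qed

lemma dense_range_poly_op_const:
  assumes "vector_space sc" "a \<noteq> 0"
  shows "dense_range (poly_op sc [:a:] T)"
proof -
  interpret vector_space sc by fact
  have "poly_op sc [:a:] T (sc (inverse a) x) = x" for x using assms(2) by simp
  then have "surj (poly_op sc [:a:] T)" by (metis surjI)
  then show ?thesis by (simp add: dense_range_def)
qed

lemma dense_range_poly_op_if_bounded_inverses: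
  fixes sc :: "'k::real_normed_field \<Rightarrow> 'a::{ab_group_add,topological_space} \<Rightarrow> 'a"
  assumes tvs: "tvs sc" and T: "cont_lin_op sc T" and rec: "top_recurrent T"
    and inverse: "\<And>n. n \<ge> 1 \<Longrightarrow>
      \<exists>c d. norm c \<le> C \<and> norm d \<le> C \<and> p dvd [:d, c:] * (monom 1 n - 1) - 1"
  shows "dense_range (poly_op sc p T)"
proof -
  interpret vector_space sc using tvs by (rule tvs_vector_space)
  have linear: "Vector_Spaces.linear sc sc T" and cont: "continuous_on UNIV T"
    using T by (simp_all add: cont_lin_op_def)
  then interpret T: module_hom sc sc T by (simp add: linear_iff_module_hom)
  show ?thesis
  proof (rule dense_range_if_recurrent_approximation[OF tvs cont T.zero rec])
    fix n :: nat
    assume "n \<ge> 1"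
    then obtain c d where cd: "norm c \<le> C" "norm d \<le> C"
      and dvd: "p dvd [:d, c:] * (monom 1 n - 1) - 1"
      using inverse by blast
    from dvd obtain h where factor: "[:d, c:] * (monom 1 n - 1) - 1 = p * h" by blast
    have "z - sc c (T ((T^^n) z - z)) - sc d ((T^^n) z - z) = poly_op sc p T (poly_op sc (- h) T z)"
      for z
    proof -
      have "poly_op sc (monom 1 n - 1) T z = (T^^n) z - z"
        by (simp add: poly_op_diff poly_op_monom)
      then have "poly_op sc ([:d, c:] * (monom 1 n - 1)) T z
          = sc d ((T^^n) z - z) + sc c (T ((T^^n) z - z))"
        by (simp only: poly_op_mult[OF linear]) (simp add: poly_op_pCons[OF linear] T.scale)
      then have "z - sc c (T ((T^^n) z - z)) - sc d ((T^^n) z - z)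
          = - poly_op sc ([:d, c:] * (monom 1 n - 1) - 1) T z"
        by (simp add: poly_op_diff)
      also have "\<dots> = poly_op sc p T (poly_op sc (- h) T z)"
        unfolding factor
        by (simp only: poly_op_mult[OF linear, symmetric] mult_minus_right) (simp only: poly_op_uminus)
      finally show ?thesis .
    qed
    with cd show "\<exists>c d. norm c \<le> C \<and> norm d \<le> C \<and>
        (\<forall>z. z - sc c (T ((T^^n) z - z)) - sc d ((T^^n) z - z) \<in> range (poly_op sc p T))"
      by (intro exI[of _ c] exI[of _ d]) auto
  qed
qed

lemma norm_power_minus_one_ge:
  fixes l :: "'k::real_normed_field"
  assumes "n \<ge> 1"
  shows "\<bar>norm l - 1\<bar> \<le> norm (l^n - 1)"
proof -
  have "\<bar>norm l - 1\<bar> \<le> \<bar>norm l ^ n - 1\<bar>"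
  proof (cases "norm l \<ge> 1")
    case True
    then have "norm l \<le> norm l ^ n" using assms by (metis power_increasing power_one_right)
    with True show ?thesis by simp
  next
    case False
    then have "norm l ^ n \<le> norm l" using assms
      by (metis power_decreasing power_one_right norm_ge_zero less_eq_real_def not_le)
    with False show ?thesis by (simp add: power_le_one)
  qed
  also have "\<dots> \<le> norm (l^n - 1)"
    using norm_triangle_ineq3[of "l^n" 1] by (simp add: norm_power)
  finally show ?thesis .
qed

lemma dense_range_poly_op_linear_factor:
  fixes sc :: "'k::real_normed_field \<Rightarrow> 'a::{ab_group_add,topological_space} \<Rightarrow> 'a"
  assumes tvs: "tvs sc" and T: "cont_lin_op sc T" and rec: "top_recurrent T" and l: "norm l \<noteq> 1"
  shows "dense_range (poly_op sc [:- l, 1:] T)"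
proof (rule dense_range_poly_op_if_bounded_inverses[OF tvs T rec])
  fix n :: nat
  assume "n \<ge> 1"
  then have bound: "\<bar>norm l - 1\<bar> \<le> norm (l^n - 1)" by (rule norm_power_minus_one_ge)
  with l have "l^n \<noteq> 1" by auto
  define d where "d = 1 / (l^n - 1)"
  have "norm d \<le> 1 / \<bar>norm l - 1\<bar>"
    using bound l by (simp add: d_def norm_divide divide_simps)
  moreover have "[:- l, 1:] dvd [:d, 0:] * (monom 1 n - 1) - 1"
    using \<open>l^n \<noteq> 1\<close> by (simp add: poly_eq_0_iff_dvd[symmetric] poly_monom d_def)
  ultimately show "\<exists>c d. norm c \<le> 1 / \<bar>norm l - 1\<bar> \<and> norm d \<le> 1 / \<bar>norm l - 1\<bar> \<and>
      [:- l, 1:] dvd [:d, c:] * (monom 1 n - 1) - 1"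
    by (intro exI[of _ 0] exI[of _ d]) simp
qed

lemma map_poly_of_real_add:
  "map_poly complex_of_real (p + q) = map_poly of_real p + map_poly of_real q"
  by (intro poly_eqI) (simp add: coeff_map_poly)

lemma map_poly_of_real_diff:
  "map_poly complex_of_real (p - q) = map_poly of_real p - map_poly of_real q"
  by (intro poly_eqI) (simp add: coeff_map_poly)

lemma map_poly_of_real_mult:
  "map_poly complex_of_real (p * q) = map_poly of_real p * map_poly of_real q"
  by (induction p) (simp_all add: map_poly_of_real_add map_poly_smult map_poly_pCons)

lemma poly_map_poly_of_real: "poly (map_poly complex_of_real p) (of_real x) = of_real (poly p x)"
  by (simp add: poly_altdef degree_map_poly coeff_map_poly)

definition real_quadratic :: "complex \<Rightarrow> real poly" where
  "real_quadratic z = [:Re z ^ 2 + Im z ^ 2, - 2 * Re z, 1:]"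

lemma poly_real_quadratic_root: "poly (map_poly complex_of_real (real_quadratic z)) z = 0"
  by (simp add: real_quadratic_def map_poly_pCons complex_eq_iff power2_eq_square algebra_simps)

lemma real_linear_poly_eq_0_if_nonreal_root:
  fixes t :: "real poly"
  assumes "degree t \<le> 1" "poly (map_poly complex_of_real t) z = 0" "Im z \<noteq> 0"
  shows "t = 0"
proof -
  have t: "t = [:coeff t 0, coeff t 1:]"
    using assms(1) by (intro poly_eqI) (auto simp: coeff_pCons coeff_eq_0 split: nat.splits)
  have "of_real (coeff t 0) + of_real (coeff t 1) * z = 0"
    using assms(2) by (subst (asm) t) (simp add: map_poly_pCons mult.commute)
  then have "coeff t 1 * Im z = 0" "coeff t 0 + coeff t 1 * Re z = 0"
    by (simp_all add: complex_eq_iff)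
  with assms(3) show ?thesis by (subst t) simp
qed

lemma real_quadratic_dvd_if_root:
  assumes "Im z \<noteq> 0" "poly (map_poly complex_of_real f) z = 0"
  shows "real_quadratic z dvd f"
proof -
  have nonzero: "real_quadratic z \<noteq> 0" by (simp add: real_quadratic_def)
  have "degree (real_quadratic z) = 2" by (simp add: real_quadratic_def)
  then have "degree (f mod real_quadratic z) \<le> 1"
    using degree_mod_less[OF nonzero, of f] by auto
  moreover have "poly (map_poly complex_of_real (f mod real_quadratic z)) z = 0"
    using assms(2) poly_real_quadratic_root[of z]
    by (simp add: minus_div_mult_eq_mod[symmetric] map_poly_of_real_diff map_poly_of_real_mult)
  ultimately have "f mod real_quadratic z = 0"
    using assms(1) by (rule real_linear_poly_eq_0_if_nonreal_root)
  then show ?thesis by (rule mod_0_imp_dvd)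
qed

lemma dense_range_poly_op_real_quadratic:
  fixes sc :: "real \<Rightarrow> 'a::{ab_group_add,topological_space} \<Rightarrow> 'a"
  assumes tvs: "tvs sc" and T: "cont_lin_op sc T" and rec: "top_recurrent T"
    and l: "cmod l \<noteq> 1" "Im l \<noteq> 0"
  shows "dense_range (poly_op sc (real_quadratic l) T)"
proof -
  define K where "K = 1 + (1 + \<bar>Re l\<bar>) / \<bar>Im l\<bar>"
  have K: "K \<ge> 0" by (simp add: K_def)
  show ?thesis
  proof (rule dense_range_poly_op_if_bounded_inverses[OF tvs T rec, where C = "K / \<bar>cmod l - 1\<bar>"])
    fix n :: nat
    assume "n \<ge> 1"
    then have bound: "\<bar>cmod l - 1\<bar> \<le> cmod (l^n - 1)" by (rule norm_power_minus_one_ge)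
    with l(1) have "l^n \<noteq> 1" by auto
    define m where "m = 1 / (l^n - 1)"
    have m: "cmod m \<le> 1 / \<bar>cmod l - 1\<bar>"
      using bound l(1) by (simp add: m_def norm_divide divide_simps)
    text \<open>Real coordinates of \<open>m\<close> in the basis \<open>1, l\<close>.\<close>
    define c where "c = Im m / Im l"
    define d where "d = Re m - c * Re l"
    have coords: "of_real d + l * of_real c = m"
      using l(2) by (simp add: complex_eq_iff c_def d_def)
    have c_le: "\<bar>c\<bar> \<le> cmod m / \<bar>Im l\<bar>"
      by (simp add: c_def abs_divide divide_right_mono abs_Im_le_cmod)
    also have "\<dots> \<le> cmod m * K"
      using l(2) by (simp add: K_def divide_simps algebra_simps)
    finally have "\<bar>c\<bar> \<le> cmod m * K" .
    have "\<bar>d\<bar> \<le> cmod m + cmod m / \<bar>Im l\<bar> * \<bar>Re l\<bar>"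
      using abs_Re_le_cmod[of m] abs_triangle_ineq4[of "Re m" "c * Re l"]
        mult_right_mono[OF c_le, of "\<bar>Re l\<bar>"]
      by (simp add: d_def abs_mult)
    also have "\<dots> \<le> cmod m * K"
      using l(2) by (simp add: K_def divide_simps algebra_simps)
    finally have "\<bar>d\<bar> \<le> cmod m * K" .
    have "cmod m * K \<le> K / \<bar>cmod l - 1\<bar>"
      using mult_right_mono[OF m K] by simp
    moreover have "real_quadratic l dvd [:d, c:] * (monom 1 n - 1) - 1"
    proof (rule real_quadratic_dvd_if_root[OF l(2)])
      have "poly (map_poly complex_of_real ([:d, c:] * (monom 1 n - 1) - 1)) l
          = (of_real d + l * of_real c) * (l^n - 1) - 1"
        by (simp only: map_poly_of_real_diff map_poly_of_real_mult)
          (simp add: map_poly_pCons map_poly_monom poly_monom algebra_simps)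
      also have "\<dots> = 0" using \<open>l^n \<noteq> 1\<close> by (simp add: coords m_def)
      finally show "poly (map_poly complex_of_real ([:d, c:] * (monom 1 n - 1) - 1)) l = 0" .
    qed
    ultimately show "\<exists>c d. norm c \<le> K / \<bar>cmod l - 1\<bar> \<and> norm d \<le> K / \<bar>cmod l - 1\<bar> \<and>
        real_quadratic l dvd [:d, c:] * (monom 1 n - 1) - 1"
      using \<open>\<bar>c\<bar> \<le> cmod m * K\<close> \<open>\<bar>d\<bar> \<le> cmod m * K\<close> by (intro exI[of _ c] exI[of _ d]) auto
  qed
qed

lemma poly_op_real_quadratic:
  assumes "vector_space sc" "Vector_Spaces.linear sc sc T"
  shows "poly_op sc (real_quadratic z) T x
    = T (T x) - sc (2 * Re z) (T x) + sc (Re z ^ 2 + Im z ^ 2) x"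
proof -
  interpret vector_space sc by fact
  interpret T: module_hom sc sc T using assms(2) by (simp add: linear_iff_module_hom)
  show ?thesis
    by (simp add: real_quadratic_def poly_op_pCons[OF assms(2)] T.add T.diff T.scale algebra_simps)
qed

lemma dense_range_if_pairs_in_range:
  fixes G :: "'b \<Rightarrow> 'a::topological_space \<times> 'a"
  assumes "dense_range Q" "\<And>x y. (Q x, Q y) \<in> range G"
  shows "dense_range G"
proof -
  have "range Q \<times> range Q \<subseteq> range G" using assms(2) by auto
  then have "closure (range Q \<times> range Q) \<subseteq> closure (range G)" by (rule closure_mono)
  then show ?thesis using assms(1) by (auto simp: dense_range_def closure_Times)
qed

lemma dense_range_cplx_op_minus_scale:
  fixes sc :: "real \<Rightarrow> 'a::{ab_group_add,topological_space} \<Rightarrow> 'a"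
  assumes tvs: "tvs sc" and T: "cont_lin_op sc T" and rec: "top_recurrent T" and c: "cmod c \<noteq> 1"
  shows "dense_range (\<lambda>v. cplx_op T v - cplx_scale sc c v)"
proof -
  interpret vector_space sc using tvs by (rule tvs_vector_space)
  have linear: "Vector_Spaces.linear sc sc T" using T by (simp add: cont_lin_op_def)
  then interpret T: module_hom sc sc T by (simp add: linear_iff_module_hom)
  show ?thesis
  proof (cases "Im c = 0")
    case True
    then have "norm (Re c) \<noteq> 1" using c by (simp add: cmod_def)
    with tvs T rec have "dense_range (poly_op sc [:- Re c, 1:] T)"
      by (rule dense_range_poly_op_linear_factor)
    then show ?thesis
    proof (rule dense_range_if_pairs_in_range)
      fix x y
      show "(poly_op sc [:- Re c, 1:] T x, poly_op sc [:- Re c, 1:] T y)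
          \<in> range (\<lambda>v. cplx_op T v - cplx_scale sc c v)"
        by (rule range_eqI[where x = "(x, y)"])
          (use True in \<open>simp add: poly_op_linear_factor[OF linear] cplx_op_def cplx_scale_def\<close>)
    qed
  next
    case False
    with tvs T rec c have "dense_range (poly_op sc (real_quadratic c) T)"
      by (intro dense_range_poly_op_real_quadratic)
    then show ?thesis
    proof (rule dense_range_if_pairs_in_range)
      fix x y
      have two: "sc (r * 2) u = sc r u + sc r u" for r u by (metis mult_2_right scale_left_distrib)
      txt \<open>The real quadratic in \<open>T\<close> factors as \<open>(T - c)(T - cnj c)\<close> on the complexification.\<close>
      show "(poly_op sc (real_quadratic c) T x, poly_op sc (real_quadratic c) T y)
          \<in> range (\<lambda>v. cplx_op T v - cplx_scale sc c v)"
        by (rule range_eqI[where x = "cplx_op T (x, y) - cplx_scale sc (cnj c) (x, y)"])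
          (simp add: poly_op_real_quadratic[OF vector_space_axioms linear] cplx_op_def
            cplx_scale_def T.add T.diff T.scale algebra_simps power2_eq_square two)
    qed
  qed
qed

lemma dense_range_poly_op_by_factorization:
  fixes sc :: "'k::{field,topological_space} \<Rightarrow> 'a::{ab_group_add,topological_space} \<Rightarrow> 'a"
  assumes tvs: "tvs sc" and T: "cont_lin_op sc T" and "P p"
    and nonzero: "\<And>p. P p \<Longrightarrow> p \<noteq> 0"
    and factor: "\<And>p. P p \<Longrightarrow> degree p > 0 \<Longrightarrow>
      \<exists>q s. p = q * s \<and> degree q > 0 \<and> P s \<and> dense_range (poly_op sc q T)"
  shows "dense_range (poly_op sc p T)"
  using \<open>P p\<close>
proof (induction "degree p" arbitrary: p rule: less_induct)
  case less
  have vs: "vector_space sc" by (rule tvs_vector_space[OF tvs])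
  have linear: "Vector_Spaces.linear sc sc T" using T by (simp add: cont_lin_op_def)
  show ?case
  proof (cases "degree p = 0")
    case True
    then have "p = [:coeff p 0:]" "coeff p 0 \<noteq> 0"
      using nonzero[OF less.prems] by (auto elim: degree_eq_zeroE)
    then show ?thesis using dense_range_poly_op_const[OF vs] by metis
  next
    case False
    then obtain q s where qs: "p = q * s" "degree q > 0" "P s" "dense_range (poly_op sc q T)"
      using factor[OF less.prems] by blast
    have "q \<noteq> 0" "s \<noteq> 0" using qs(2) nonzero[OF qs(3)] by auto
    then have "degree s < degree p" using qs(1,2) by (simp add: degree_mult_eq)
    then have "dense_range (poly_op sc q T \<circ> poly_op sc s T)"
      using dense_range_comp[OF continuous_on_poly_op[OF tvs T] qs(4)] less.hyps qs(3) by blast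
    moreover have "poly_op sc q T \<circ> poly_op sc s T = poly_op sc p T"
      using vector_space.poly_op_mult[OF vs linear] qs(1) by fastforce
    ultimately show ?thesis by simp
  qed
qed

lemma dense_range_poly_op_complex:
  fixes sc :: "complex \<Rightarrow> 'a::{ab_group_add,topological_space} \<Rightarrow> 'a"
  assumes tvs: "tvs sc" and T: "cont_lin_op sc T" and rec: "top_recurrent T"
    and roots: "\<forall>z. cmod z = 1 \<longrightarrow> poly p z \<noteq> 0"
  shows "dense_range (poly_op sc p T)"
  using roots
proof (rule dense_range_poly_op_by_factorization[OF tvs T])
  fix p :: "complex poly"
  assume roots: "\<forall>z. cmod z = 1 \<longrightarrow> poly p z \<noteq> 0"
  then show "p \<noteq> 0" by (metis norm_one poly_0)
  assume "degree p > 0"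
  then obtain z where "poly p z = 0"
    using fundamental_theorem_of_algebra constant_degree by (metis neq0_conv)
  then obtain s where s: "p = [:- z, 1:] * s" by (metis poly_eq_0_iff_dvd dvdE)
  have "cmod z \<noteq> 1" using roots \<open>poly p z = 0\<close> by auto
  with tvs T rec have "dense_range (poly_op sc [:- z, 1:] T)"
    by (rule dense_range_poly_op_linear_factor)
  moreover have "\<forall>w. cmod w = 1 \<longrightarrow> poly s w \<noteq> 0" using roots s by auto
  ultimately show "\<exists>q s. p = q * s \<and> degree q > 0 \<and> (\<forall>z. cmod z = 1 \<longrightarrow> poly s z \<noteq> 0)
      \<and> dense_range (poly_op sc q T)"
    using s by (intro exI[of _ "[:- z, 1:]"] exI[of _ s]) simp
qed

lemma dense_range_poly_op_real:
  fixes sc :: "real \<Rightarrow> 'a::{ab_group_add,topological_space} \<Rightarrow> 'a"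
  assumes tvs: "tvs sc" and T: "cont_lin_op sc T" and rec: "top_recurrent T"
    and roots: "\<forall>z. cmod z = 1 \<longrightarrow> poly (map_poly complex_of_real p) z \<noteq> 0"
  shows "dense_range (poly_op sc p T)"
  using roots
proof (rule dense_range_poly_op_by_factorization[OF tvs T])
  fix p :: "real poly"
  assume roots: "\<forall>z. cmod z = 1 \<longrightarrow> poly (map_poly complex_of_real p) z \<noteq> 0"
  then show "p \<noteq> 0" by (metis norm_one poly_0 map_poly_0)
  assume "degree p > 0"
  then obtain z where z: "poly (map_poly complex_of_real p) z = 0"
    using fundamental_theorem_of_algebra constant_degree
    by (metis degree_map_poly neq0_conv of_real_eq_0_iff)
  have "cmod z \<noteq> 1" using roots z by auto
  obtain q s where qs: "p = q * s" "degree q > 0" "dense_range (poly_op sc q T)"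
  proof (cases "Im z = 0")
    case True
    then have "poly p (Re z) = 0"
      using z poly_map_poly_of_real[of p "Re z"] by (simp add: complex_is_Real_iff of_real_Re)
    then obtain s where "p = [:- Re z, 1:] * s" by (metis poly_eq_0_iff_dvd dvdE)
    moreover have "norm (Re z) \<noteq> 1" using \<open>cmod z \<noteq> 1\<close> True by (simp add: cmod_def)
    then have "dense_range (poly_op sc [:- Re z, 1:] T)"
      using tvs T rec by (intro dense_range_poly_op_linear_factor)
    ultimately show ?thesis by (intro that[of "[:- Re z, 1:]" s]) auto
  next
    case False
    then obtain s where "p = real_quadratic z * s"
      using real_quadratic_dvd_if_root z by blast
    moreover have "dense_range (poly_op sc (real_quadratic z) T)"
      using tvs T rec \<open>cmod z \<noteq> 1\<close> False by (rule dense_range_poly_op_real_quadratic)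
    ultimately show ?thesis by (intro that[of "real_quadratic z" s]) (auto simp: real_quadratic_def)
  qed
  moreover have "\<forall>w. cmod w = 1 \<longrightarrow> poly (map_poly complex_of_real s) w \<noteq> 0"
    using roots qs(1) by (auto simp: map_poly_of_real_mult)
  ultimately show "\<exists>q s. p = q * s \<and> degree q > 0
      \<and> (\<forall>z. cmod z = 1 \<longrightarrow> poly (map_poly complex_of_real s) z \<noteq> 0) \<and> dense_range (poly_op sc q T)"
    by blast
qed

lemma dense_range_minus_scale:
  fixes sc :: "'k::real_normed_field \<Rightarrow> 'a::{ab_group_add,topological_space} \<Rightarrow> 'a"
  assumes tvs: "tvs sc" and T: "cont_lin_op sc T" and rec: "top_recurrent T" and l: "norm l \<noteq> 1"
  shows "dense_range (\<lambda>x. T x - sc l x)"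
proof -
  have "poly_op sc [:- l, 1:] T = (\<lambda>x. T x - sc l x)"
    using vector_space.poly_op_linear_factor[OF tvs_vector_space[OF tvs]] T
    by (auto simp: cont_lin_op_def)
  with dense_range_poly_op_linear_factor[OF assms] show ?thesis by simp
qed

theorem mainTheorem6:
  fixes scR :: "real \<Rightarrow> 'a::{ab_group_add,t2_space} \<Rightarrow> 'a" and TR :: "'a \<Rightarrow> 'a"
    and scC :: "complex \<Rightarrow> 'b::{ab_group_add,t2_space} \<Rightarrow> 'b" and TC :: "'b \<Rightarrow> 'b"
  shows
   "(tvs scR \<and> cont_lin_op scR TR \<and> top_recurrent TR \<longrightarrow>
        (\<forall>c::real. \<bar>c\<bar> \<noteq> 1 \<longrightarrow> dense_range (\<lambda>x. TR x - scR c x))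
      \<and> (\<forall>c::complex. cmod c \<noteq> 1 \<longrightarrow>
            dense_range (\<lambda>v. cplx_op TR v - cplx_scale scR c v))
      \<and> (\<forall>p::real poly. (\<forall>z::complex. cmod z = 1 \<longrightarrow> poly (map_poly complex_of_real p) z \<noteq> 0)
            \<longrightarrow> dense_range (poly_op scR p TR)))
  \<and> (tvs scC \<and> cont_lin_op scC TC \<and> top_recurrent TC \<longrightarrow>
        (\<forall>c::complex. cmod c \<noteq> 1 \<longrightarrow> dense_range (\<lambda>x. TC x - scC c x))
      \<and> (\<forall>p::complex poly. (\<forall>z::complex. cmod z = 1 \<longrightarrow> poly p z \<noteq> 0)
            \<longrightarrow> dense_range (poly_op scC p TC)))"
proof (intro conjI impI allI)
  assume "tvs scR \<and> cont_lin_op scR TR \<and> top_recurrent TR"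
  then have real: "tvs scR" "cont_lin_op scR TR" "top_recurrent TR" by auto
  show "dense_range (\<lambda>x. TR x - scR c x)" if "\<bar>c\<bar> \<noteq> 1" for c
    using dense_range_minus_scale[OF real, of c] that by simp
  show "dense_range (\<lambda>v. cplx_op TR v - cplx_scale scR c v)" if "cmod c \<noteq> 1" for c
    using dense_range_cplx_op_minus_scale[OF real that] .
  show "dense_range (poly_op scR p TR)"
    if "\<forall>z. cmod z = 1 \<longrightarrow> poly (map_poly complex_of_real p) z \<noteq> 0" for p
    using dense_range_poly_op_real[OF real that] .
next
  assume "tvs scC \<and> cont_lin_op scC TC \<and> top_recurrent TC"
  then have complex: "tvs scC" "cont_lin_op scC TC" "top_recurrent TC" by auto
  show "dense_range (\<lambda>x. TC x - scC c x)" if "cmod c \<noteq> 1" for c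
    using dense_range_minus_scale[OF complex that] .
  show "dense_range (poly_op scC p TC)" if "\<forall>z. cmod z = 1 \<longrightarrow> poly p z \<noteq> 0" for p
    using dense_range_poly_op_complex[OF complex that] .
qed

end
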